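(* Let $\rho:\mathbb R_+\to\mathbb R_+$ be concave with $\rho(0)=0$, $\rho(x)>0$ for $x>0$, $\rho'$ continuous on $(0,\infty)$ with values in $\mathbb R_+$, $\lim_{x\to0^+}\rho(x)/x=+\infty$, and $\int_0^\varepsilon\frac{1}{\rho(x)}\mathrm dx<\infty$ for some $\varepsilon>0$. Let $c\in\mathbb R_+$ be a constant, $\rho_c(x):=\rho(x)+c$, and $H_c(u):=\int_0^u\frac{1}{c+\rho(x)}\mathrm dx$ for $u\in\mathbb R_+$. Then $H_c$ is well-defined and strictly increasing on $\mathbb R_+$, $H_c(0)=0$ and $\lim_{u\to+\infty}H_c(u)=+\infty$. Moreover, denoting by $H_c^{-1}:\mathbb R_+\to\mathbb R_+$ the inverse function of $H_c$, for every $k_1\ge H_c(1)$ and $k_2,k_3>0$, $$H_c^{-1}(k_1+k_2)\le 2e^{k_2(\rho(1)+c)}H_c^{-1}(k_1)$$ and $$\rho_c\big(k_3H_c^{-1}(k_1+k_2)\big)\le 2e^{k_2(\rho(1)+c)}\rho_c\big(k_3H_c^{-1}(k_1)\big).$$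
   Context: $\mathbb R_+=[0,\infty)$. *)

theory Defs
  imports "HOL-Analysis.Analysis"
begin

definition Hc :: "(real \<Rightarrow> real) \<Rightarrow> real \<Rightarrow> real \<Rightarrow> real" where
  "Hc \<rho> c u = integral {0..u} (\<lambda>x. 1 / (c + \<rho> x))"

definition Hc_inv :: "(real \<Rightarrow> real) \<Rightarrow> real \<Rightarrow> real \<Rightarrow> real" where
  "Hc_inv \<rho> c = the_inv_into {0..} (Hc \<rho> c)"

definition rho_c :: "(real \<Rightarrow> real) \<Rightarrow> real \<Rightarrow> real \<Rightarrow> real" where
  "rho_c \<rho> c x = \<rho> x + c"

end

theory Submission
  imports Defs
begin

text \<open>Concavity of \<open>\<rho>\<^sub>c = \<rho> + c\<close> with \<open>\<rho>\<^sub>c(0) = c \<ge> 0\<close> makes \<open>\<rho>\<^sub>c(x)/x\<close>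
  nonincreasing. Hence \<open>c + \<rho>(x) \<le> \<rho>\<^sub>c(1) x\<close> for \<open>x \<ge> 1\<close>, so \<open>H\<^sub>c(v) - H\<^sub>c(u) \<ge> (ln v - ln u)/\<rho>\<^sub>c(1)\<close>
  for \<open>1 \<le> u \<le> v\<close>: this gives \<open>H\<^sub>c(u) \<rightarrow> \<infinity>\<close> and, for \<open>u = H\<^sub>c\<^sup>-\<^sup>1(k\<^sub>1)\<close>, \<open>v = H\<^sub>c\<^sup>-\<^sup>1(k\<^sub>1 + k\<^sub>2)\<close>,
  the bound \<open>v \<le> e\<^bsup>k\<^sub>2 \<rho>\<^sub>c(1)\<^esup> u\<close>. The bound on \<open>\<rho>\<^sub>c(k\<^sub>3 v)\<close> follows by applying the
  monotonicity of \<open>\<rho>\<^sub>c(x)/x\<close> once more, to \<open>k\<^sub>3 u \<le> k\<^sub>3 v\<close>.\<close>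

lemma concave_on_div_antimono:
  fixes f :: "real \<Rightarrow> real"
  assumes "concave_on {0..} f" and "0 \<le> f 0" and "0 < x" and "x \<le> y"
  shows "f y / y \<le> f x / x"
proof -
  have "(1 - x / y) * f 0 + (x / y) * f y \<le> f ((1 - x / y) *\<^sub>R 0 + (x / y) *\<^sub>R y)"
    by (rule concave_onD[OF assms(1)]) (use assms in auto)
  also have "\<dots> = f x"
    using assms by simp
  finally have "(1 - x / y) * f 0 + (x / y) * f y \<le> f x" .
  moreover have "0 \<le> (1 - x / y) * f 0"
    using assms by simp
  ultimately have "(x / y) * f y \<le> f x"
    by linarith
  then show ?thesis
    using assms by (simp add: field_simps)
qed

lemma antimono_on_integrable_on:
  fixes f :: "real \<Rightarrow> real"
  assumes "antimono_on {a..b} f"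
  shows "f integrable_on {a..b}"
proof -
  have "mono_on {a..b} (\<lambda>x. - f x)"
    using assms by (auto simp: monotone_on_def)
  then show ?thesis
    using integrable_neg integrable_on_mono_on by fastforce
qed

lemma integral_pos_if_ge_endpoint:
  fixes f :: "real \<Rightarrow> real"
  assumes "a < b" and "f integrable_on {a..b}" and "\<And>x. x \<in> {a..b} \<Longrightarrow> 0 \<le> f x"
    and "\<And>x. x \<in> {a<..b} \<Longrightarrow> f b \<le> f x" and "0 < f b"
  shows "0 < integral {a..b} f"
proof -
  define m where "m = (a + b) / 2"
  have m: "a < m" "m < b"
    using assms(1) by (auto simp: m_def)
  have int_mb: "f integrable_on {m..b}"
    using integrable_subinterval_real[OF assms(2)] m by simp
  have "0 < integral {m..b} (\<lambda>_. f b)"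
    using m assms(5) by simp
  also have "\<dots> \<le> integral {m..b} f"
    by (rule integral_le) (use int_mb m assms(4) in auto)
  also have "\<dots> \<le> integral {a..b} f"
    by (rule integral_subset_le) (use int_mb m assms(2,3) in auto)
  finally show ?thesis .
qed

lemma integral_ge_ln_diff:
  fixes f :: "real \<Rightarrow> real"
  assumes "0 < K" and "0 < u" and "u \<le> v" and "f integrable_on {u..v}"
    and "\<And>x. x \<in> {u..v} \<Longrightarrow> 1 / (K * x) \<le> f x"
  shows "(ln v - ln u) / K \<le> integral {u..v} f"
proof -
  have ln_int: "((\<lambda>x. 1 / (K * x)) has_integral (ln v / K - ln u / K)) {u..v}"
  proof (rule fundamental_theorem_of_calculus[OF assms(3)])
    fix x assume "x \<in> {u..v}"
    then have "0 < x"
      using assms(2) by auto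
    then show "((\<lambda>x. ln x / K) has_vector_derivative 1 / (K * x)) (at x within {u..v})"
      unfolding has_real_derivative_iff_has_vector_derivative[symmetric]
      using assms(1) by (auto intro!: derivative_eq_intros simp: field_simps)
  qed
  have "integral {u..v} (\<lambda>x. 1 / (K * x)) \<le> integral {u..v} f"
    by (rule integral_le) (use ln_int assms(4,5) in auto)
  then show ?thesis
    using integral_unique[OF ln_int] by (simp add: diff_divide_distrib)
qed

lemma mono_on_greaterThan_if_deriv_nonneg:
  fixes f f' :: "real \<Rightarrow> real"
  assumes "\<And>x. a < x \<Longrightarrow> (f has_real_derivative f' x) (at x)"
    and "\<And>x. a < x \<Longrightarrow> 0 \<le> f' x"
  shows "mono_on {a<..} f"
proof (rule mono_onI)
  fix x y assume "x \<in> {a<..}" and "x \<le> y"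
  then show "f x \<le> f y"
    by (intro deriv_nonneg_imp_mono[of x y f f']) (use assms in auto)
qed

locale Hc_setting =
  fixes \<rho> :: "real \<Rightarrow> real" and c :: real
  assumes concave: "concave_on {0..} \<rho>"
    and zero: "\<rho> 0 = 0"
    and pos: "\<And>x. 0 < x \<Longrightarrow> 0 < \<rho> x"
    and mono_pos: "mono_on {0<..} \<rho>"
    and integrable_near_0: "\<exists>\<epsilon>>0. (\<lambda>x. 1 / \<rho> x) integrable_on {0..\<epsilon>}"
    and c_nonneg: "0 \<le> c"
begin

lemma nonneg: "0 \<le> x \<Longrightarrow> 0 \<le> \<rho> x"
  using pos[of x] zero by (cases "x = 0") auto

lemma mono: "mono_on {0..} \<rho>"
proof (rule mono_onI)
  fix x y :: real assume "x \<in> {0..}" and "x \<le> y"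
  then show "\<rho> x \<le> \<rho> y"
    using mono_pos nonneg zero by (cases "x = 0") (auto simp: monotone_on_def)
qed

lemma rho_c_nonneg: "0 \<le> x \<Longrightarrow> 0 \<le> rho_c \<rho> c x"
  using nonneg c_nonneg by (simp add: rho_c_def)

lemma rho_c_1_pos: "0 < rho_c \<rho> c 1"
  using pos c_nonneg by (simp add: rho_c_def add_pos_nonneg)

lemma rho_c_div_antimono:
  assumes "0 < x" and "x \<le> y"
  shows "rho_c \<rho> c y / y \<le> rho_c \<rho> c x / x"
proof (rule concave_on_div_antimono[OF _ _ assms])
  show "concave_on {0..} (rho_c \<rho> c)"
    unfolding rho_c_def by (intro concave_on_add concave) (simp add: concave_on_const)
qed (use c_nonneg zero in \<open>simp add: rho_c_def\<close>)

lemma integrand_antimono: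
  assumes "0 \<le> a" and "0 < c + \<rho> a"
  shows "antimono_on {a..b} (\<lambda>x. 1 / (c + \<rho> x))"
proof (rule monotone_onI)
  fix x y assume "x \<in> {a..b}" "y \<in> {a..b}" "x \<le> y"
  then have "\<rho> a \<le> \<rho> x" and "\<rho> x \<le> \<rho> y"
    using assms(1) mono by (auto simp: monotone_on_def)
  then show "1 / (c + \<rho> y) \<le> 1 / (c + \<rho> x)"
    using assms(2) by (intro frac_le) simp_all
qed

lemma integrand_integrable: "(\<lambda>x. 1 / (c + \<rho> x)) integrable_on {0..u}"
proof (cases "c = 0")
  case True
  obtain \<epsilon> where \<epsilon>: "0 < \<epsilon>" "(\<lambda>x. 1 / (c + \<rho> x)) integrable_on {0..\<epsilon>}"
    using integrable_near_0 True by auto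
  show ?thesis
  proof (cases "u \<le> \<epsilon>")
    case True
    then show ?thesis
      using \<epsilon> by (cases "u < 0") (auto intro: integrable_subinterval_real)
  next
    case False
    have "(\<lambda>x. 1 / (c + \<rho> x)) integrable_on {\<epsilon>..u}"
      using \<epsilon>(1) pos[of \<epsilon>] True by (intro antimono_on_integrable_on integrand_antimono) simp_all
    then show ?thesis
      using Henstock_Kurzweil_Integration.integrable_combine[of 0 \<epsilon> u] \<epsilon> False by simp
  qed
next
  case False
  then show ?thesis
    using c_nonneg zero by (intro antimono_on_integrable_on integrand_antimono) simp_all
qed

lemma Hc_diff:
  assumes "0 \<le> a" and "a \<le> b"
  shows "Hc \<rho> c b - Hc \<rho> c a = integral {a..b} (\<lambda>x. 1 / (c + \<rho> x))"
  using Henstock_Kurzweil_Integration.integral_combine[OF assms integrand_integrable] by (simp add: Hc_def)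

lemma Hc_0: "Hc \<rho> c 0 = 0"
  by (simp add: Hc_def)

lemma Hc_strict_mono: "strict_mono_on {0..} (Hc \<rho> c)"
proof (rule strict_mono_onI)
  fix a b :: real assume ab: "a \<in> {0..}" "b \<in> {0..}" "a < b"
  have "0 < integral {a..b} (\<lambda>x. 1 / (c + \<rho> x))"
  proof (rule integral_pos_if_ge_endpoint)
    show "(\<lambda>x. 1 / (c + \<rho> x)) integrable_on {a..b}"
      using integrable_subinterval_real[OF integrand_integrable[of b]] ab by simp
    show "1 / (c + \<rho> b) \<le> 1 / (c + \<rho> x)" if "x \<in> {a<..b}" for x
      using integrand_antimono[of x b] that ab pos[of x] c_nonneg by (auto simp: monotone_on_def)
  qed (use ab pos[of b] nonneg c_nonneg add_nonneg_pos in auto)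
  then show "Hc \<rho> c a < Hc \<rho> c b"
    using Hc_diff[of a b] ab by simp
qed

lemma Hc_le_iff: "0 \<le> x \<Longrightarrow> 0 \<le> y \<Longrightarrow> Hc \<rho> c x \<le> Hc \<rho> c y \<longleftrightarrow> x \<le> y"
  using strict_mono_on_less_eq[OF Hc_strict_mono] by simp

lemma Hc_nonneg: "0 \<le> u \<Longrightarrow> 0 \<le> Hc \<rho> c u"
  using Hc_le_iff[of 0 u] Hc_0 by simp

lemma Hc_diff_ge_ln:
  assumes "1 \<le> u" and "u \<le> v"
  shows "(ln v - ln u) / rho_c \<rho> c 1 \<le> Hc \<rho> c v - Hc \<rho> c u"
proof -
  have "(ln v - ln u) / rho_c \<rho> c 1 \<le> integral {u..v} (\<lambda>x. 1 / (c + \<rho> x))"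
  proof (rule integral_ge_ln_diff[OF rho_c_1_pos])
    show "(\<lambda>x. 1 / (c + \<rho> x)) integrable_on {u..v}"
      using integrable_subinterval_real[OF integrand_integrable[of v]] assms by simp
    show "1 / (rho_c \<rho> c 1 * x) \<le> 1 / (c + \<rho> x)" if "x \<in> {u..v}" for x
    proof -
      have "0 < rho_c \<rho> c x" and "rho_c \<rho> c x \<le> rho_c \<rho> c 1 * x"
        using that assms rho_c_div_antimono[of 1 x] pos[of x] c_nonneg
        by (auto simp: rho_c_def field_simps add_pos_nonneg)
      then show ?thesis
        by (simp add: frac_le rho_c_def add.commute)
    qed
  qed (use assms in auto)
  then show ?thesis
    using Hc_diff[of u v] assms by simp
qed

lemma Hc_at_top: "filterlim (Hc \<rho> c) at_top at_top"
proof (rule filterlim_at_top_mono)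
  show "LIM x at_top. (1 / rho_c \<rho> c 1) * ln x :> at_top"
    by (rule filterlim_tendsto_pos_mult_at_top[OF tendsto_const _ ln_at_top])
      (use rho_c_1_pos in simp)
  show "\<forall>\<^sub>F x in at_top. (1 / rho_c \<rho> c 1) * ln x \<le> Hc \<rho> c x"
    using eventually_ge_at_top[of 1]
    by eventually_elim (use Hc_diff_ge_ln[of 1] Hc_nonneg[of 1] in force)
qed

lemma Hc_bij: "bij_betw (Hc \<rho> c) {0..} {0..}"
proof (rule bij_betw_imageI)
  show "inj_on (Hc \<rho> c) {0..}"
    using Hc_strict_mono by (rule strict_mono_on_imp_inj_on)
  show "Hc \<rho> c ` {0..} = {0..}"
  proof (intro antisym subsetI)
    fix y :: real assume "y \<in> {0..}"
    have "\<forall>\<^sub>F x in at_top. 0 \<le> x \<and> y \<le> Hc \<rho> c x"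
      using Hc_at_top eventually_ge_at_top[of 0] by (auto simp: filterlim_at_top intro: eventually_conj)
    then obtain M where M: "0 \<le> M" "y \<le> Hc \<rho> c M"
      unfolding eventually_at_top_linorder by blast
    have "continuous_on {0..M} (Hc \<rho> c)"
      unfolding Hc_def by (rule indefinite_integral_continuous_1[OF integrand_integrable])
    then obtain x where "0 \<le> x" "Hc \<rho> c x = y"
      using IVT'[of "Hc \<rho> c" 0 y M] M Hc_0 \<open>y \<in> {0..}\<close> by auto
    then show "y \<in> Hc \<rho> c ` {0..}"
      by force
  qed (use Hc_nonneg in auto)
qed

lemma Hc_inv_nonneg: "0 \<le> y \<Longrightarrow> 0 \<le> Hc_inv \<rho> c y"
  using Hc_bij the_inv_into_into[of "Hc \<rho> c" "{0..}" y "{0..}"]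
  by (auto simp: Hc_inv_def bij_betw_def)

lemma Hc_Hc_inv: "0 \<le> y \<Longrightarrow> Hc \<rho> c (Hc_inv \<rho> c y) = y"
  using f_the_inv_into_f_bij_betw[OF Hc_bij] by (simp add: Hc_inv_def)

lemma Hc_inv_add_le:
  assumes "Hc \<rho> c 1 \<le> k1" and "0 \<le> k2"
  shows "1 \<le> Hc_inv \<rho> c k1"
    and "Hc_inv \<rho> c k1 \<le> Hc_inv \<rho> c (k1 + k2)"
    and "Hc_inv \<rho> c (k1 + k2) \<le> exp (k2 * rho_c \<rho> c 1) * Hc_inv \<rho> c k1"
proof -
  define u v where "u = Hc_inv \<rho> c k1" and "v = Hc_inv \<rho> c (k1 + k2)"
  have "0 \<le> k1"
    using assms(1) Hc_nonneg[of 1] by simp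
  then have u: "0 \<le> u" "Hc \<rho> c u = k1" and v: "0 \<le> v" "Hc \<rho> c v = k1 + k2"
    using Hc_inv_nonneg Hc_Hc_inv assms(2) by (simp_all add: u_def v_def)
  show u1: "1 \<le> u" and uv: "u \<le> v"
    using Hc_le_iff[of 1 u] Hc_le_iff[of u v] u v assms by auto
  have "(ln v - ln u) / rho_c \<rho> c 1 \<le> k2"
    using Hc_diff_ge_ln[OF u1 uv] u v by simp
  then have "ln v \<le> ln u + k2 * rho_c \<rho> c 1"
    using rho_c_1_pos by (simp add: field_simps)
  then have "exp (ln v) \<le> exp (ln u + k2 * rho_c \<rho> c 1)"
    by simp
  then show "v \<le> exp (k2 * rho_c \<rho> c 1) * u"
    using u1 uv by (simp add: exp_add mult.commute)
qed

lemma rho_c_Hc_inv_add_le: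
  assumes "Hc \<rho> c 1 \<le> k1" and "0 \<le> k2" and "0 < k3"
  shows "rho_c \<rho> c (k3 * Hc_inv \<rho> c (k1 + k2))
    \<le> exp (k2 * rho_c \<rho> c 1) * rho_c \<rho> c (k3 * Hc_inv \<rho> c k1)"
proof -
  define u v E where "u = Hc_inv \<rho> c k1" and "v = Hc_inv \<rho> c (k1 + k2)"
    and "E = exp (k2 * rho_c \<rho> c 1)"
  have u1: "1 \<le> u" and uv: "u \<le> v" and vE: "v \<le> E * u"
    using Hc_inv_add_le[OF assms(1,2)] by (simp_all add: u_def v_def E_def)
  have "rho_c \<rho> c (k3 * v) / (k3 * v) \<le> rho_c \<rho> c (k3 * u) / (k3 * u)"
    using rho_c_div_antimono u1 uv assms(3) by simp
  then have "rho_c \<rho> c (k3 * v) \<le> (v / u) * rho_c \<rho> c (k3 * u)"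
    using u1 uv assms(3) by (simp add: field_simps)
  also have "\<dots> \<le> E * rho_c \<rho> c (k3 * u)"
    using vE u1 rho_c_nonneg[of "k3 * u"] assms(3)
    by (intro mult_right_mono) (simp_all add: divide_le_eq)
  finally show ?thesis
    by (simp add: u_def v_def E_def)
qed

end

theorem lemma2p2:
  fixes \<rho> \<rho>' :: "real \<Rightarrow> real" and c :: real
  assumes nonneg: "\<forall>x\<ge>0. \<rho> x \<ge> 0"
    and conc: "concave_on {0..} \<rho>"
    and zero: "\<rho> 0 = 0"
    and pos: "\<forall>x>0. \<rho> x > 0"
    and deriv: "\<forall>x>0. (\<rho> has_real_derivative \<rho>' x) (at x)"
    and deriv_cont: "continuous_on {0<..} \<rho>'"
    and deriv_nonneg: "\<forall>x>0. \<rho>' x \<ge> 0"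
    and lim0: "filterlim (\<lambda>x. \<rho> x / x) at_top (at_right 0)"
    and integ: "\<exists>\<epsilon>>0. (\<lambda>x. 1 / \<rho> x) integrable_on {0..\<epsilon>}"
    and c: "c \<ge> 0"
  shows "(\<forall>u\<ge>0. (\<lambda>x. 1 / (c + \<rho> x)) integrable_on {0..u})
    \<and> strict_mono_on {0..} (Hc \<rho> c)
    \<and> Hc \<rho> c 0 = 0
    \<and> filterlim (Hc \<rho> c) at_top at_top
    \<and> bij_betw (Hc \<rho> c) {0..} {0..}
    \<and> (\<forall>k1 k2 k3. k1 \<ge> Hc \<rho> c 1 \<and> k2 > 0 \<and> k3 > 0 \<longrightarrow>
         Hc_inv \<rho> c (k1 + k2) \<le> 2 * exp (k2 * (\<rho> 1 + c)) * Hc_inv \<rho> c k1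
       \<and> rho_c \<rho> c (k3 * Hc_inv \<rho> c (k1 + k2))
           \<le> 2 * exp (k2 * (\<rho> 1 + c)) * rho_c \<rho> c (k3 * Hc_inv \<rho> c k1))"
proof -
  interpret Hc_setting \<rho> c
  proof
    show "mono_on {0<..} \<rho>"
      using deriv deriv_nonneg by (intro mono_on_greaterThan_if_deriv_nonneg) auto
  qed (use conc zero pos integ c in auto)
  have twice: "E * b \<le> 2 * E * b" if "0 \<le> E" and "0 \<le> b" for E b :: real
    using mult_nonneg_nonneg[OF that] unfolding mult.assoc by linarith
  have "Hc_inv \<rho> c (k1 + k2) \<le> 2 * exp (k2 * (\<rho> 1 + c)) * Hc_inv \<rho> c k1
      \<and> rho_c \<rho> c (k3 * Hc_inv \<rho> c (k1 + k2))
          \<le> 2 * exp (k2 * (\<rho> 1 + c)) * rho_c \<rho> c (k3 * Hc_inv \<rho> c k1)"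
    if "Hc \<rho> c 1 \<le> k1" "0 < k2" "0 < k3" for k1 k2 k3
  proof -
    have "exp (k2 * rho_c \<rho> c 1) = exp (k2 * (\<rho> 1 + c))"
      by (simp add: rho_c_def)
    moreover have "0 \<le> Hc_inv \<rho> c k1" and "0 \<le> rho_c \<rho> c (k3 * Hc_inv \<rho> c k1)"
      using Hc_inv_add_le(1)[of k1 k2] rho_c_nonneg that by simp_all
    ultimately show ?thesis
      using Hc_inv_add_le(3)[of k1 k2] rho_c_Hc_inv_add_le[of k1 k2 k3] that
        twice[of "exp (k2 * (\<rho> 1 + c))"] by (auto intro: order_trans)
  qed
  then show ?thesis
    using integrand_integrable Hc_strict_mono Hc_0 Hc_at_top Hc_bij by blast
qed

end
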